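(* If $Y\subseteq 2^\omega$ is consonant, then Alice has no winning strategy in the grouped Menger game played on $2^\omega\setminus Y$.
   Context: A $k$-cover of $X$ is an open cover such that every compact subset of $X$ is contained in a member of the cover. In the game $G_1(\mathcal K,\mathcal O)$ on $X$, in round $n$ Alice picks an open $k$-cover $\mathcal U_n$ of $X$ and Bob picks $U_n\in\mathcal U_n$; Bob wins if $\{U_n:n\in\omega\}$ covers $X$, otherwise Alice wins. $Y\subseteq 2^\omega$ is consonant iff Alice has no winning strategy in $G_1(\mathcal K,\mathcal O)$ played on $2^\omega\setminus Y$. Grouped Menger game on $X\subseteq 2^\omega$: in each round $n\in\omega$ Alice selects a natural number $l_n>0$ and then the players play $l_n$ subrounds of the Menger game, indexed by $i\in[L_n,L_{n+1})$ where $L_0=0$, $L_{n+1}=l_0+\dots+l_n$: in subround $i$ Alice picks an open cover $\mathcal U_i$ of $X$ and Bob picks a finite $\mathcal F_i\subseteq\mathcal U_i$. Bob wins if $X=\bigcup_{n\in\omega}\bigcap_{i\in[L_n,L_{n+1})}\bigcup\mathcal F_i$; otherwise Alice wins. *)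

theory Defs
  imports "HOL-Analysis.Analysis"
begin

definition cantor_space :: "(nat \<Rightarrow> bool) topology" where
  "cantor_space = product_topology (\<lambda>_. discrete_topology UNIV) UNIV"

definition open_cover_of :: "'a topology \<Rightarrow> 'a set \<Rightarrow> 'a set set \<Rightarrow> bool" where
  "open_cover_of T X \<U> \<longleftrightarrow> (\<forall>U\<in>\<U>. openin (subtopology T X) U) \<and> \<Union>\<U> = X"

definition k_cover_of :: "'a topology \<Rightarrow> 'a set \<Rightarrow> 'a set set \<Rightarrow> bool" where
  "k_cover_of T X \<U> \<longleftrightarrow> open_cover_of T X \<U> \<and>
     (\<forall>K. K \<subseteq> X \<and> compactin (subtopology T X) K \<longrightarrow> (\<exists>U\<in>\<U>. K \<subseteq> U))"

definition alice_strategy_G1KO :: "'a topology \<Rightarrow> 'a set \<Rightarrow> ('a set list \<Rightarrow> 'a set set) \<Rightarrow> bool" where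
  "alice_strategy_G1KO T X \<sigma> \<longleftrightarrow> (\<forall>s. k_cover_of T X (\<sigma> s))"

definition play_G1KO :: "('a set list \<Rightarrow> 'a set set) \<Rightarrow> (nat \<Rightarrow> 'a set) \<Rightarrow> bool" where
  "play_G1KO \<sigma> U \<longleftrightarrow> (\<forall>n. U n \<in> \<sigma> (map U [0..<n]))"

definition alice_wins_G1KO :: "'a topology \<Rightarrow> 'a set \<Rightarrow> bool" where
  "alice_wins_G1KO T X \<longleftrightarrow> (\<exists>\<sigma>. alice_strategy_G1KO T X \<sigma> \<and>
      (\<forall>U. play_G1KO \<sigma> U \<longrightarrow> \<Union>(range U) \<noteq> X))"

definition consonant :: "(nat \<Rightarrow> bool) set \<Rightarrow> bool" where
  "consonant Y \<longleftrightarrow> \<not> alice_wins_G1KO cantor_space (UNIV - Y)"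

text \<open>Alice's strategy is a pair (lam, sigma): at the start of
  round n (i.e. after Bob's moves F_0..F_(L_n - 1)) she picks l_n = lam [F_0,...,F_(L_n - 1)] > 0;
  in subround i she plays the open cover sigma [F_0,...,F_(i-1)].\<close>
fun grp_L :: "('a set set list \<Rightarrow> nat) \<Rightarrow> (nat \<Rightarrow> 'a set set) \<Rightarrow> nat \<Rightarrow> nat" where
  "grp_L lam F 0 = 0"
| "grp_L lam F (Suc n) = grp_L lam F n + lam (map F [0..<grp_L lam F n])"

definition alice_strategy_grouped :: "'a topology \<Rightarrow> 'a set \<Rightarrow> ('a set set list \<Rightarrow> nat) \<Rightarrow>
    ('a set set list \<Rightarrow> 'a set set) \<Rightarrow> bool" where
  "alice_strategy_grouped T X lam \<sigma> \<longleftrightarrow> (\<forall>s. lam s > 0) \<and> (\<forall>s. open_cover_of T X (\<sigma> s))"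

definition play_grouped :: "('a set set list \<Rightarrow> 'a set set) \<Rightarrow> (nat \<Rightarrow> 'a set set) \<Rightarrow> bool" where
  "play_grouped \<sigma> F \<longleftrightarrow> (\<forall>i. finite (F i) \<and> F i \<subseteq> \<sigma> (map F [0..<i]))"

definition bob_wins_grouped :: "'a set \<Rightarrow> ('a set set list \<Rightarrow> nat) \<Rightarrow> (nat \<Rightarrow> 'a set set) \<Rightarrow> bool" where
  "bob_wins_grouped X lam F \<longleftrightarrow>
     X = (\<Union>n. \<Inter>i\<in>{grp_L lam F n..<grp_L lam F (Suc n)}. \<Union>(F i))"

definition alice_wins_grouped_menger :: "'a topology \<Rightarrow> 'a set \<Rightarrow> bool" where
  "alice_wins_grouped_menger T X \<longleftrightarrow> (\<exists>lam \<sigma>. alice_strategy_grouped T X lam \<sigma> \<and>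
      (\<forall>F. play_grouped \<sigma> F \<longrightarrow> \<not> bob_wins_grouped X lam F))"

end

theory Submission
  imports Defs
begin

text \<open>A winning strategy (lam, sigma) of Alice in the grouped Menger game is turned into one in
  G_1(K,O): after each history she plays the sets \<Inter>_j \<Union>F_j over all legal answers
  F_0, ..., F_(l-1) of Bob to a whole round of (lam, sigma). These form a k-cover, since a compact
  set is covered by a finite subfamily of every cover in the round. Decoding each move U_n of Bob
  into a round producing it and concatenating the rounds gives a grouped play whose n-th round
  intersection is U_n; as Bob loses that play, the U_n do not cover X.\<close>

definition concat_prefix :: "(nat \<Rightarrow> 'b list) \<Rightarrow> nat \<Rightarrow> 'b list" where
  "concat_prefix rs n = concat (map rs [0..<n])"

definition flatten :: "(nat \<Rightarrow> 'b list) \<Rightarrow> nat \<Rightarrow> 'b" where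
  "flatten rs i = concat_prefix rs (Suc i) ! i"

lemma concat_prefix_0 [simp]: "concat_prefix rs 0 = []"
  by (simp add: concat_prefix_def)

lemma concat_prefix_Suc [simp]: "concat_prefix rs (Suc n) = concat_prefix rs n @ rs n"
  by (simp add: concat_prefix_def)

lemma concat_prefix_append:
  assumes "m \<le> m'"
  shows "concat_prefix rs m' = concat_prefix rs m @ concat (map rs [m..<m'])"
  using assms upt_add_eq_append[of 0 m "m' - m"] by (simp add: concat_prefix_def)

lemma length_concat_prefix_ge:
  assumes "\<And>n. rs n \<noteq> []"
  shows "n \<le> length (concat_prefix rs n)"
proof (induction n)
  case (Suc n)
  have "length (rs n) \<ge> 1" using assms[of n] by (simp add: Suc_le_eq)
  with Suc.IH show ?case by simp
qed simp

lemma nth_concat_prefix: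
  assumes "\<And>n. rs n \<noteq> []" and "i < length (concat_prefix rs m)"
  shows "concat_prefix rs m ! i = flatten rs i"
proof (cases "m \<le> Suc i")
  case True
  then show ?thesis
    using assms(2)
    by (simp add: flatten_def concat_prefix_append[of m "Suc i"] nth_append del: concat_prefix_Suc)
next
  case False
  have "i < length (concat_prefix rs (Suc i))"
    using length_concat_prefix_ge[of rs "Suc i", OF assms(1)] by simp
  with False show ?thesis
    by (simp add: flatten_def concat_prefix_append[of "Suc i" m] nth_append del: concat_prefix_Suc)
qed

lemma map_flatten_upt:
  assumes "\<And>n. rs n \<noteq> []" and "k \<le> length (concat_prefix rs m)"
  shows "map (flatten rs) [0..<k] = take k (concat_prefix rs m)"
  using assms by (intro nth_equalityI) (auto simp: nth_concat_prefix)

lemma map_flatten_block: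
  assumes "\<And>n. rs n \<noteq> []"
  shows "map (flatten rs) [length (concat_prefix rs n)..<length (concat_prefix rs (Suc n))] = rs n"
proof -
  let ?a = "length (concat_prefix rs n)" and ?b = "length (concat_prefix rs (Suc n))"
  have "map (flatten rs) [0..<?b] = concat_prefix rs n @ rs n"
    using map_flatten_upt[of rs ?b "Suc n", OF assms] by simp
  moreover have "[0..<?b] = [0..<?a] @ [?a..<?b]"
    by (simp add: upt_add_eq_append[of 0 ?a "length (rs n)", simplified])
  moreover have "map (flatten rs) [0..<?a] = concat_prefix rs n"
    using map_flatten_upt[of rs ?a n, OF assms] by simp
  ultimately show ?thesis by simp
qed

lemma flatten_index_in_block:
  assumes "\<And>n. rs n \<noteq> []"
  obtains n j where "j < length (rs n)" "i = length (concat_prefix rs n) + j"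
proof -
  have "\<exists>n j. j < length (rs n) \<and> i = length (concat_prefix rs n) + j"
    if "i < length (concat_prefix rs m)" for m
    using that
  proof (induction m)
    case (Suc m)
    show ?case
    proof (cases "i < length (concat_prefix rs m)")
      case False
      then show ?thesis
        using Suc.prems by (intro exI[of _ m] exI[of _ "i - length (concat_prefix rs m)"]) simp
    qed (rule Suc.IH)
  qed simp
  moreover have "i < length (concat_prefix rs (Suc i))"
    using length_concat_prefix_ge[of rs "Suc i", OF assms] by simp
  ultimately show ?thesis using that by blast
qed

lemma grp_L_flatten:
  assumes "\<And>n. rs n \<noteq> []" and "\<And>n. lam (concat_prefix rs n) = length (rs n)"
  shows "grp_L lam (flatten rs) n = length (concat_prefix rs n)"
proof (induction n)
  case (Suc n)
  then show ?case using assms(2) map_flatten_upt[of rs _ n, OF assms(1)] by simp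
qed simp

definition round_responses ::
    "('a set set list \<Rightarrow> 'a set set) \<Rightarrow> 'a set set list \<Rightarrow> nat \<Rightarrow> 'a set set list set" where
  "round_responses \<sigma> h l = {r. length r = l \<and> (\<forall>j<l. finite (r!j) \<and> r!j \<subseteq> \<sigma> (h @ take j r))}"

definition round_set :: "'a set set list \<Rightarrow> 'a set" where
  "round_set r = \<Inter>(Union ` set r)"

definition round_cover ::
    "('a set set list \<Rightarrow> nat) \<Rightarrow> ('a set set list \<Rightarrow> 'a set set) \<Rightarrow> 'a set set list \<Rightarrow> 'a set set" where
  "round_cover lam \<sigma> h = round_set ` round_responses \<sigma> h (lam h)"

lemma open_cover_of_subset_topspace:
  assumes "open_cover_of T X \<U>"
  shows "X \<subseteq> topspace T"
proof -
  have "U \<subseteq> topspace T" if "U \<in> \<U>" for U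
    using assms that openin_subset[of "subtopology T X" U] by (auto simp: open_cover_of_def)
  then show ?thesis using assms by (auto simp: open_cover_of_def)
qed

lemma round_responses_covering_compact:
  assumes cov: "\<And>s. open_cover_of T X (\<sigma> s)" and K: "compactin (subtopology T X) K"
  shows "\<exists>r\<in>round_responses \<sigma> h l. \<forall>j<l. K \<subseteq> \<Union>(r!j)"
proof (induction l)
  case 0
  then show ?case by (auto simp: round_responses_def)
next
  case (Suc l)
  then obtain r where r: "r \<in> round_responses \<sigma> h l" "\<forall>j<l. K \<subseteq> \<Union>(r!j)" by blast
  have "K \<subseteq> X" using compactin_subset_topspace[OF K] by auto
  with K cov[of "h @ r"] obtain f where f: "finite f" "f \<subseteq> \<sigma> (h @ r)" "K \<subseteq> \<Union>f"
    unfolding compactin_def open_cover_of_def by metis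
  have "r @ [f] \<in> round_responses \<sigma> h (Suc l) \<and> (\<forall>j<Suc l. K \<subseteq> \<Union>((r @ [f])!j))"
    using r f by (auto simp: round_responses_def nth_append less_Suc_eq)
  then show ?case by blast
qed

lemma openin_round_set:
  assumes cov: "\<And>s. open_cover_of T X (\<sigma> s)"
    and r: "r \<in> round_responses \<sigma> h l" and "l > 0"
  shows "openin (subtopology T X) (round_set r)"
  unfolding round_set_def
proof (intro openin_Inter)
  show "Union ` set r \<noteq> {}" using r \<open>l > 0\<close> by (auto simp: round_responses_def)
  have "openin (subtopology T X) (\<Union>(r!j))" if "j < length r" for j
    using r that cov[of "h @ take j r"] by (auto simp: round_responses_def open_cover_of_def)
  then show "openin (subtopology T X) U" if "U \<in> Union ` set r" for U
    using that by (auto simp: in_set_conv_nth)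
qed auto

lemma k_cover_round_cover:
  assumes "alice_strategy_grouped T X lam \<sigma>"
  shows "k_cover_of T X (round_cover lam \<sigma> h)"
proof -
  have cov: "\<And>s. open_cover_of T X (\<sigma> s)" and pos: "lam h > 0"
    using assms by (auto simp: alice_strategy_grouped_def)
  have opn: "\<forall>U\<in>round_cover lam \<sigma> h. openin (subtopology T X) U"
    using openin_round_set[OF cov _ pos] by (auto simp: round_cover_def)
  have sub: "\<exists>U\<in>round_cover lam \<sigma> h. K \<subseteq> U" if K: "compactin (subtopology T X) K" for K
  proof -
    obtain r where r: "r \<in> round_responses \<sigma> h (lam h)" "\<forall>j<lam h. K \<subseteq> \<Union>(r!j)"
      using round_responses_covering_compact[of T X \<sigma>, OF cov K] by blast
    then have "K \<subseteq> round_set r"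
      unfolding round_set_def round_responses_def by (fastforce simp: in_set_conv_nth)
    with r show ?thesis by (auto simp: round_cover_def)
  qed
  have "\<Union>(round_cover lam \<sigma> h) \<subseteq> X"
    using opn by (metis Sup_le_iff le_inf_iff openin_subset topspace_subtopology)
  moreover have "X \<subseteq> \<Union>(round_cover lam \<sigma> h)"
  proof
    fix x assume "x \<in> X"
    with open_cover_of_subset_topspace[OF cov] have "x \<in> topspace (subtopology T X)"
      by auto
    then show "x \<in> \<Union>(round_cover lam \<sigma> h)" using sub[of "{x}"] by auto
  qed
  ultimately show ?thesis using opn sub by (auto simp: k_cover_of_def open_cover_of_def)
qed

lemma play_grouped_flatten:
  assumes "\<And>n. rs n \<noteq> []"
    and "\<And>n. rs n \<in> round_responses \<sigma> (concat_prefix rs n) (length (rs n))"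
  shows "play_grouped \<sigma> (flatten rs)"
  unfolding play_grouped_def
proof
  fix i
  obtain n j where j: "j < length (rs n)" and i: "i = length (concat_prefix rs n) + j"
    using flatten_index_in_block[of rs i, OF assms(1)] by blast
  have "map (flatten rs) [0..<i] = take i (concat_prefix rs (Suc n))"
    using map_flatten_upt[of rs i "Suc n", OF assms(1)] i j by simp
  also have "\<dots> = concat_prefix rs n @ take j (rs n)"
    using i by simp
  finally have hist: "map (flatten rs) [0..<i] = concat_prefix rs n @ take j (rs n)" .
  have "flatten rs i = rs n ! j"
    using nth_concat_prefix[of rs i "Suc n", OF assms(1)] i j by (simp add: nth_append)
  moreover have "finite (rs n ! j) \<and> rs n ! j \<subseteq> \<sigma> (concat_prefix rs n @ take j (rs n))"
    using assms(2)[of n] j unfolding round_responses_def by blast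
  ultimately show "finite (flatten rs i) \<and> flatten rs i \<subseteq> \<sigma> (map (flatten rs) [0..<i])"
    unfolding hist by simp
qed

lemma bob_wins_grouped_flatten_iff:
  assumes "\<And>n. rs n \<noteq> []" and "\<And>n. lam (concat_prefix rs n) = length (rs n)"
  shows "bob_wins_grouped X lam (flatten rs) \<longleftrightarrow> X = (\<Union>n. round_set (rs n))"
proof -
  have "flatten rs ` {grp_L lam (flatten rs) n..<grp_L lam (flatten rs) (Suc n)} = set (rs n)" for n
    using arg_cong[OF map_flatten_block[of rs n, OF assms(1)], of set]
    unfolding grp_L_flatten[of rs lam, OF assms] by simp
  then have "(\<Inter>i\<in>{grp_L lam (flatten rs) n..<grp_L lam (flatten rs) (Suc n)}. \<Union>(flatten rs i))
      = round_set (rs n)" for n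
    unfolding round_set_def by (metis image_image)
  then show ?thesis unfolding bob_wins_grouped_def by presburger
qed

text \<open>SOME makes the decoding total: a set that is not a round set decodes to an arbitrary list.\<close>
definition round_decode ::
    "('a set set list \<Rightarrow> nat) \<Rightarrow> ('a set set list \<Rightarrow> 'a set set) \<Rightarrow> 'a set set list \<Rightarrow> 'a set \<Rightarrow> 'a set set list" where
  "round_decode lam \<sigma> h U = (SOME r. r \<in> round_responses \<sigma> h (lam h) \<and> round_set r = U)"

definition decoded_history ::
    "('a set set list \<Rightarrow> nat) \<Rightarrow> ('a set set list \<Rightarrow> 'a set set) \<Rightarrow> 'a set list \<Rightarrow> 'a set set list" where
  "decoded_history lam \<sigma> us = foldl (\<lambda>h U. h @ round_decode lam \<sigma> h U) [] us"

lemma play_G1KO_round_cover_decode: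
  assumes P: "play_G1KO (\<lambda>us. round_cover lam \<sigma> (decoded_history lam \<sigma> us)) U"
  obtains rs where "\<And>n. rs n \<in> round_responses \<sigma> (concat_prefix rs n) (lam (concat_prefix rs n))"
    and "\<And>n. round_set (rs n) = U n"
proof -
  define rs where "rs n = round_decode lam \<sigma> (decoded_history lam \<sigma> (map U [0..<n])) (U n)" for n
  have hist: "decoded_history lam \<sigma> (map U [0..<n]) = concat_prefix rs n" for n
    by (induction n) (simp_all add: decoded_history_def rs_def)
  have "rs n \<in> round_responses \<sigma> (concat_prefix rs n) (lam (concat_prefix rs n))
      \<and> round_set (rs n) = U n" for n
  proof -
    have "U n \<in> round_cover lam \<sigma> (concat_prefix rs n)"
      using P unfolding play_G1KO_def by (simp add: hist)
    then have "\<exists>r. r \<in> round_responses \<sigma> (concat_prefix rs n) (lam (concat_prefix rs n))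
        \<and> round_set r = U n"
      unfolding round_cover_def by blast
    moreover have "rs n = round_decode lam \<sigma> (concat_prefix rs n) (U n)"
      by (simp add: rs_def hist)
    ultimately show ?thesis unfolding round_decode_def by (metis (mono_tags, lifting) someI_ex)
  qed
  then show ?thesis using that by blast
qed

lemma alice_wins_G1KO_if_alice_wins_grouped_menger:
  assumes "alice_wins_grouped_menger T X"
  shows "alice_wins_G1KO T X"
proof -
  obtain lam \<sigma> where A: "alice_strategy_grouped T X lam \<sigma>"
    and W: "\<And>F. play_grouped \<sigma> F \<Longrightarrow> \<not> bob_wins_grouped X lam F"
    using assms unfolding alice_wins_grouped_menger_def by blast
  define \<tau> where "\<tau> us = round_cover lam \<sigma> (decoded_history lam \<sigma> us)" for us
  have "\<Union>(range U) \<noteq> X" if P: "play_G1KO \<tau> U" for U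
  proof -
    obtain rs where resp: "\<And>n. rs n \<in> round_responses \<sigma> (concat_prefix rs n) (lam (concat_prefix rs n))"
      and U: "\<And>n. round_set (rs n) = U n"
      using play_G1KO_round_cover_decode[OF P[unfolded \<tau>_def]] by blast
    have len: "lam (concat_prefix rs n) = length (rs n)" for n
      using resp[of n] by (simp add: round_responses_def)
    have nonempty: "rs n \<noteq> []" for n
      using A len[of n] unfolding alice_strategy_grouped_def by (metis length_greater_0_conv)
    have "play_grouped \<sigma> (flatten rs)"
      using play_grouped_flatten[of rs \<sigma>, OF nonempty] resp by (simp add: len)
    then show ?thesis
      using W bob_wins_grouped_flatten_iff[of rs lam X, OF nonempty len] U by simp
  qed
  moreover have "alice_strategy_G1KO T X \<tau>"
    using k_cover_round_cover[OF A] by (simp add: alice_strategy_G1KO_def \<tau>_def)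
  ultimately show ?thesis unfolding alice_wins_G1KO_def by blast
qed

theorem mainTheorem4:
  fixes Y :: "(nat \<Rightarrow> bool) set"
  assumes "consonant Y"
  shows "\<not> alice_wins_grouped_menger cantor_space (UNIV - Y)"
  using assms alice_wins_G1KO_if_alice_wins_grouped_menger unfolding consonant_def by blast

end
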